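(* Let $A,A^*$ be a Leonard pair in $\mathcal A$. Then there exists a unique antiautomorphism $\dagger$ of $\mathcal A$ (i.e. a $\mathbb K$-linear bijection $\mathcal A\to\mathcal A$ with $(XY)^\dagger=Y^\dagger X^\dagger$ for all $X,Y$) such that $A^\dagger=A$ and $A^{*\dagger}=A^*$. Moreover $X^{\dagger\dagger}=X$ for all $X\in\mathcal A$.
   Context: Let $\mathbb K$ be a field, $d\ge0$ an integer, and $\mathcal A$ a $\mathbb K$-algebra isomorphic to $\mathrm{Mat}_{d+1}(\mathbb K)$; let $V$ be an irreducible (left) $\mathcal A$-module (so $\dim V=d+1$). A square matrix is tridiagonal if every nonzero entry lies on the diagonal, subdiagonal or superdiagonal; a tridiagonal matrix is irreducible if all its subdiagonal and superdiagonal entries are nonzero. A Leonard pair in $\mathcal A$ is an ordered pair $A,A^*$ of elements of $\mathcal A$ such that (i) there is a basis of $V$ with respect to which the matrix representing $A$ is irreducible tridiagonal and the matrix representing $A^*$ is diagonal, and (ii) there is a basis of $V$ with respect to which the matrix representing $A$ is diagonal and the matrix representing $A^*$ is irreducible tridiagonal. *)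

theory Defs
  imports "Jordan_Normal_Form.Matrix"
begin

text \<open>We take the algebra \<open>\<A>\<close> to be the full matrix algebra of (d+1) x (d+1) matrices
  over the field \<open>'a\<close> (every algebra isomorphic to it gives an equivalent statement),
  and \<open>V\<close> the column space of dimension d+1. A basis of V corresponds to an invertible
  matrix P (its columns), and the matrix representing X with respect to that basis is P^-1 X P.\<close>

definition tridiagonal :: "'a::zero mat \<Rightarrow> bool" where
  "tridiagonal M \<longleftrightarrow> (\<forall>i<dim_row M. \<forall>j<dim_col M. (i > j + 1 \<or> j > i + 1) \<longrightarrow> M $$ (i,j) = 0)"

definition irreducible_tridiagonal :: "'a::zero mat \<Rightarrow> bool" where
  "irreducible_tridiagonal M \<longleftrightarrow> tridiagonal M \<and>
     (\<forall>i. i + 1 < dim_row M \<longrightarrow> M $$ (i+1,i) \<noteq> 0 \<and> M $$ (i,i+1) \<noteq> 0)"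

definition leonard_pair :: "nat \<Rightarrow> 'a::field mat \<Rightarrow> 'a mat \<Rightarrow> bool" where
  "leonard_pair d A As \<longleftrightarrow>
     A \<in> carrier_mat (d+1) (d+1) \<and> As \<in> carrier_mat (d+1) (d+1) \<and>
     (\<exists>P Pi. P \<in> carrier_mat (d+1) (d+1) \<and> Pi \<in> carrier_mat (d+1) (d+1) \<and>
        P * Pi = 1\<^sub>m (d+1) \<and> Pi * P = 1\<^sub>m (d+1) \<and>
        irreducible_tridiagonal (Pi * A * P) \<and> diagonal_mat (Pi * As * P)) \<and>
     (\<exists>P Pi. P \<in> carrier_mat (d+1) (d+1) \<and> Pi \<in> carrier_mat (d+1) (d+1) \<and>
        P * Pi = 1\<^sub>m (d+1) \<and> Pi * P = 1\<^sub>m (d+1) \<and>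
        diagonal_mat (Pi * A * P) \<and> irreducible_tridiagonal (Pi * As * P))"

definition antiautomorphism :: "nat \<Rightarrow> ('a::field mat \<Rightarrow> 'a mat) \<Rightarrow> bool" where
  "antiautomorphism d f \<longleftrightarrow>
     bij_betw f (carrier_mat (d+1) (d+1)) (carrier_mat (d+1) (d+1)) \<and>
     (\<forall>X\<in>carrier_mat (d+1) (d+1). \<forall>Y\<in>carrier_mat (d+1) (d+1). f (X + Y) = f X + f Y) \<and>
     (\<forall>c. \<forall>X\<in>carrier_mat (d+1) (d+1). f (c \<cdot>\<^sub>m X) = c \<cdot>\<^sub>m f X) \<and>
     (\<forall>X\<in>carrier_mat (d+1) (d+1). \<forall>Y\<in>carrier_mat (d+1) (d+1). f (X * Y) = f Y * f X)"

end

theory Submission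
  imports Defs
begin

(* Work in a basis where A is irreducible tridiagonal T and A* is diagonal D. For the diagonal
   matrix K with K (i+1) / K i = T(i+1,i) / T(i,i+1), the map Y -> K Y^T K^-1 is an involutive
   antiautomorphism fixing T and every diagonal matrix; transporting it back gives the required
   antiautomorphism. Uniqueness holds because A and A* generate the whole matrix algebra: since
   A* is also irreducible tridiagonal in another basis, no polynomial of degree <= d annihilates
   it, so the diagonal entries of D are distinct and the idempotents E_ii are polynomials in D;
   then E_ii T E_jj = T(i,j) E_ij produces the matrix units next to the diagonal, and their
   products all the others. *)

lemma sum_eq_single:
  fixes g :: "nat \<Rightarrow> 'a::comm_monoid_add"
  assumes "j < n" "\<And>l. l < n \<Longrightarrow> l \<noteq> j \<Longrightarrow> g l = 0"
  shows "(\<Sum>l = 0..<n. g l) = g j"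
  using assms by (subst sum.mono_neutral_right[of "{0..<n}" "{j}"]) auto

section \<open>Conjugation by an invertible matrix\<close>

lemma mult_inverse_cancel_left:
  fixes P R Z :: "'a::semiring_1 mat"
  assumes "P \<in> carrier_mat n n" "R \<in> carrier_mat n n" "Z \<in> carrier_mat n m" "P * R = 1\<^sub>m n"
  shows "P * (R * Z) = Z"
proof -
  have "P * (R * Z) = (P * R) * Z"
    by (metis assoc_mult_mat assms(1-3))
  with assms show ?thesis by simp
qed

lemma conj_mat_cancel:
  fixes P R X :: "'a::semiring_1 mat"
  assumes "P \<in> carrier_mat n n" "R \<in> carrier_mat n n" "X \<in> carrier_mat n n" "R * P = 1\<^sub>m n"
  shows "R * (P * X * R) * P = X"
  using assms by (simp add: assoc_mult_mat[of _ n n _ n _ n] mult_inverse_cancel_left[of R n P _ n])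

lemma conj_mat_mult:
  fixes P R X Y :: "'a::semiring_1 mat"
  assumes "P \<in> carrier_mat n n" "R \<in> carrier_mat n n" "X \<in> carrier_mat n n" "Y \<in> carrier_mat n n"
    and "P * R = 1\<^sub>m n"
  shows "R * (X * Y) * P = (R * X * P) * (R * Y * P)"
  using assms by (simp add: assoc_mult_mat[of _ n n _ n _ n] mult_inverse_cancel_left[of P n R _ n])

lemma conj_mat_add:
  fixes P R X Y :: "'a::semiring_1 mat"
  assumes "P \<in> carrier_mat n n" "R \<in> carrier_mat n n" "X \<in> carrier_mat n n" "Y \<in> carrier_mat n n"
  shows "R * (X + Y) * P = R * X * P + R * Y * P"
  using assms by (simp add: mult_add_distrib_mat[of _ n n] add_mult_distrib_mat[of _ n n])

lemma conj_mat_smult: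
  fixes P R X :: "'a::comm_semiring_1 mat"
  assumes "P \<in> carrier_mat n n" "R \<in> carrier_mat n n" "X \<in> carrier_mat n n"
  shows "R * (c \<cdot>\<^sub>m X) * P = c \<cdot>\<^sub>m (R * X * P)"
  using assms by (simp add: mult_smult_distrib[of _ n n] mult_smult_assoc_mat[of _ n n])

lemma conj_mat_minus_scalar:
  fixes P R M :: "'a::comm_ring_1 mat"
  assumes "P \<in> carrier_mat n n" "R \<in> carrier_mat n n" "M \<in> carrier_mat n n" "R * P = 1\<^sub>m n"
  shows "R * (M - c \<cdot>\<^sub>m 1\<^sub>m n) * P = R * M * P - c \<cdot>\<^sub>m 1\<^sub>m n"
  using assms by (simp add: mult_minus_distrib_mat[of _ n n] minus_mult_distrib_mat[of _ n n]
      conj_mat_smult[of P n R])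

lemma bij_betw_conj_mat:
  fixes P R :: "'a::semiring_1 mat"
  assumes "P \<in> carrier_mat n n" "R \<in> carrier_mat n n" "P * R = 1\<^sub>m n" "R * P = 1\<^sub>m n"
  shows "bij_betw (\<lambda>X. R * X * P) (carrier_mat n n) (carrier_mat n n)"
  by (rule bij_betw_byWitness[where f' = "\<lambda>Y. P * Y * R"])
    (use assms conj_mat_cancel[of P n R] conj_mat_cancel[of R n P] in auto)

section \<open>Matrix units\<close>

definition mat_unit :: "nat \<Rightarrow> nat \<Rightarrow> nat \<Rightarrow> 'a::semiring_1 mat" where
  "mat_unit n i j = mat n n (\<lambda>(a,b). if a = i \<and> b = j then 1 else 0)"

lemma mat_unit_carrier[simp]: "mat_unit n i j \<in> carrier_mat n n"
  by (simp add: mat_unit_def)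

lemma mat_unit_mult:
  assumes "j < n"
  shows "mat_unit n i j * mat_unit n j k = (mat_unit n i k :: 'a::semiring_1 mat)"
  by (rule eq_matI)
    (use assms in \<open>auto simp: mat_unit_def scalar_prod_def sum_eq_single[of j]\<close>)

lemma mat_unit_sandwich:
  fixes M :: "'a::semiring_1 mat"
  assumes "i < n" "j < n" "M \<in> carrier_mat n n"
  shows "mat_unit n i i * M * mat_unit n j j = M $$ (i,j) \<cdot>\<^sub>m mat_unit n i j"
proof -
  have "mat_unit n i i * M = mat n n (\<lambda>(a,b). if a = i then M $$ (i,b) else 0)"
    by (rule eq_matI) (use assms in \<open>auto simp: mat_unit_def scalar_prod_def sum_eq_single[of i]\<close>)
  then show ?thesis
    by (intro eq_matI) (use assms in \<open>auto simp: mat_unit_def scalar_prod_def sum_eq_single[of j]\<close>)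
qed

section \<open>Polynomials in a matrix\<close>

definition mat_factor_prod :: "nat \<Rightarrow> 'a::comm_ring_1 mat \<Rightarrow> 'a list \<Rightarrow> 'a mat" where
  "mat_factor_prod n M cs = foldr (\<lambda>c X. (M - c \<cdot>\<^sub>m 1\<^sub>m n) * X) cs (1\<^sub>m n)"

lemma mat_factor_prod_Nil[simp]: "mat_factor_prod n M [] = 1\<^sub>m n"
  by (simp add: mat_factor_prod_def)

lemma mat_factor_prod_Cons[simp]:
  "mat_factor_prod n M (c # cs) = (M - c \<cdot>\<^sub>m 1\<^sub>m n) * mat_factor_prod n M cs"
  by (simp add: mat_factor_prod_def)

lemma mat_factor_prod_carrier[simp]:
  "M \<in> carrier_mat n n \<Longrightarrow> mat_factor_prod n M cs \<in> carrier_mat n n"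
  by (induction cs) auto

lemma mat_factor_prod_mat_diag:
  "mat_factor_prod n (mat_diag n f) cs = mat_diag n (\<lambda>a. \<Prod>c\<leftarrow>cs. f a - c)"
proof (induction cs)
  case (Cons c cs)
  have "mat_diag n f - c \<cdot>\<^sub>m 1\<^sub>m n = mat_diag n (\<lambda>a. f a - c)"
    by (rule eq_matI) (auto simp: mat_diag_def)
  with Cons show ?case by simp
qed simp

lemma mat_factor_prod_diagonal:
  assumes "D \<in> carrier_mat n n" "diagonal_mat D"
  shows "mat_factor_prod n D cs = mat_diag n (\<lambda>a. \<Prod>c\<leftarrow>cs. D $$ (a,a) - c)"
proof -
  have "mat_diag n (\<lambda>a. D $$ (a,a)) = D"
    by (rule eq_matI) (use assms in \<open>auto simp: mat_diag_def diagonal_mat_def\<close>)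
  then show ?thesis using mat_factor_prod_mat_diag[of n "\<lambda>a. D $$ (a,a)" cs] by simp
qed

lemma mat_factor_prod_conj:
  fixes P R M :: "'a::comm_ring_1 mat"
  assumes "P \<in> carrier_mat n n" "R \<in> carrier_mat n n" "M \<in> carrier_mat n n"
    "P * R = 1\<^sub>m n" "R * P = 1\<^sub>m n"
  shows "R * mat_factor_prod n M cs * P = mat_factor_prod n (R * M * P) cs"
proof (induction cs)
  case Nil
  show ?case using assms by simp
next
  case (Cons c cs)
  have "R * mat_factor_prod n M (c # cs) * P
      = (R * (M - c \<cdot>\<^sub>m 1\<^sub>m n) * P) * (R * mat_factor_prod n M cs * P)"
    unfolding mat_factor_prod_Cons
    by (rule conj_mat_mult) (use assms in \<open>auto intro: minus_carrier_mat\<close>)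
  with Cons show ?case using assms by (simp del: assoc_mult_mat add: conj_mat_minus_scalar)
qed


text \<open>The first column of p(T) vanishes below position deg p and is nonzero there: each factor
  T - c I pushes the support of a column down by exactly one step.\<close>
lemma mat_factor_prod_irreducible_tridiagonal_col:
  fixes T :: "'a::idom mat"
  assumes T: "T \<in> carrier_mat n n" "irreducible_tridiagonal T"
  shows "length cs < n \<Longrightarrow> mat_factor_prod n T cs $$ (length cs, 0) \<noteq> 0 \<and>
    (\<forall>i<n. length cs < i \<longrightarrow> mat_factor_prod n T cs $$ (i,0) = 0)"
proof (induction cs)
  case (Cons c cs)
  define m where "m = length cs"
  define M where "M = mat_factor_prod n T cs"
  have m: "Suc m < n" using Cons.prems by (simp add: m_def)
  have IH: "M $$ (m,0) \<noteq> 0" "\<And>l. l < n \<Longrightarrow> m < l \<Longrightarrow> M $$ (l,0) = 0"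
    using Cons.IH m unfolding m_def M_def by auto
  have T0: "T $$ (i,l) = 0" if "i < n" "l < n" "l + 1 < i" for i l
    using T that unfolding irreducible_tridiagonal_def tridiagonal_def by auto
  have Mc: "M \<in> carrier_mat n n" using T by (simp add: M_def)
  have entry: "mat_factor_prod n T (c # cs) $$ (i,0) =
      (\<Sum>l = 0..<n. (T $$ (i,l) - c * (if i = l then 1 else 0)) * M $$ (l,0))" if "i < n" for i
    using that m carrier_matD[OF T(1)] carrier_matD[OF Mc]
    by (auto simp: M_def[symmetric] scalar_prod_def intro!: sum.cong)
  have "mat_factor_prod n T (c # cs) $$ (Suc m, 0) = T $$ (Suc m, m) * M $$ (m,0)"
    unfolding entry[OF m] by (subst sum_eq_single[of m]) (use m IH T0 in \<open>auto simp: nat_neq_iff\<close>)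
  moreover have "T $$ (Suc m, m) \<noteq> 0"
    using T m unfolding irreducible_tridiagonal_def by auto
  moreover have "mat_factor_prod n T (c # cs) $$ (i,0) = 0" if "i < n" "Suc m < i" for i
    unfolding entry[OF that(1)]
  proof (rule sum.neutral, intro ballI)
    fix l assume l: "l \<in> {0..<n}"
    show "(T $$ (i,l) - c * (if i = l then 1 else 0)) * M $$ (l,0) = 0"
    proof (cases "l \<le> m")
      case True
      then show ?thesis using T0[of i l] that l by auto
    qed (use IH(2) l in auto)
  qed
  ultimately show ?case using IH(1) by (simp add: m_def)
qed simp

text \<open>Otherwise the product of D - c I over the distinct diagonal entries c of D would be a
  polynomial of degree < n annihilating M, and hence the irreducible tridiagonal conjugate of M.\<close>
lemma distinct_diag_if_similar_irreducible_tridiagonal: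
  fixes M :: "'a::idom mat"
  assumes M: "M \<in> carrier_mat n n"
    and PR: "P \<in> carrier_mat n n" "R \<in> carrier_mat n n" "P * R = 1\<^sub>m n" "R * P = 1\<^sub>m n"
    and D: "diagonal_mat (R * M * P)"
    and QQi: "Q \<in> carrier_mat n n" "Qi \<in> carrier_mat n n" "Q * Qi = 1\<^sub>m n" "Qi * Q = 1\<^sub>m n"
    and T: "irreducible_tridiagonal (Qi * M * Q)"
  shows "distinct (diag_mat (R * M * P))"
proof (rule ccontr)
  define D where "D = R * M * P"
  define cs where "cs = remdups (diag_mat D)"
  assume "\<not> distinct (diag_mat (R * M * P))"
  then have "length cs \<noteq> length (diag_mat D)"
    by (simp add: cs_def D_def length_remdups_eq remdups_id_iff_distinct)
  then have len: "length cs < n"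
    using length_remdups_leq[of "diag_mat D"] PR M by (simp add: cs_def D_def diag_mat_def)
  have Dc: "D \<in> carrier_mat n n" using PR M by (simp add: D_def)
  have "mat_factor_prod n D cs = 0\<^sub>m n n"
    unfolding mat_factor_prod_diagonal[OF Dc D[folded D_def]]
    by (rule eq_matI) (use Dc in \<open>auto simp: mat_diag_def cs_def diag_mat_def prod_list_zero_iff\<close>)
  moreover have "P * D * R = M"
    unfolding D_def by (rule conj_mat_cancel) (use PR M in auto)
  then have "P * mat_factor_prod n D cs * R = mat_factor_prod n M cs"
    using mat_factor_prod_conj[of R n P D cs] PR Dc by simp
  ultimately have "mat_factor_prod n M cs = 0\<^sub>m n n" using PR by simp
  then have "mat_factor_prod n (Qi * M * Q) cs = 0\<^sub>m n n"
    using mat_factor_prod_conj[of Q n Qi M cs] QQi M by simp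
  moreover have "mat_factor_prod n (Qi * M * Q) cs $$ (length cs, 0) \<noteq> 0"
    using mat_factor_prod_irreducible_tridiagonal_col[OF _ T len] QQi M by simp
  ultimately show False using len by simp
qed

section \<open>Subalgebras of the full matrix algebra\<close>

definition matrix_subalgebra :: "nat \<Rightarrow> 'a::semiring_1 mat set \<Rightarrow> bool" where
  "matrix_subalgebra n S \<longleftrightarrow> S \<subseteq> carrier_mat n n \<and> 1\<^sub>m n \<in> S \<and>
     (\<forall>X\<in>S. \<forall>Y\<in>S. X + Y \<in> S \<and> X * Y \<in> S) \<and> (\<forall>c. \<forall>X\<in>S. c \<cdot>\<^sub>m X \<in> S)"

lemma matrix_subalgebraD:
  assumes "matrix_subalgebra n S"
  shows "S \<subseteq> carrier_mat n n" "1\<^sub>m n \<in> S" "X \<in> S \<Longrightarrow> Y \<in> S \<Longrightarrow> X + Y \<in> S"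
    "X \<in> S \<Longrightarrow> Y \<in> S \<Longrightarrow> X * Y \<in> S" "X \<in> S \<Longrightarrow> c \<cdot>\<^sub>m X \<in> S"
  using assms unfolding matrix_subalgebra_def by blast+

lemma mat_factor_prod_mem:
  fixes M :: "'a::comm_ring_1 mat"
  assumes S: "matrix_subalgebra n S" and "M \<in> S"
  shows "mat_factor_prod n M cs \<in> S"
proof (induction cs)
  case (Cons c cs)
  have "M - c \<cdot>\<^sub>m 1\<^sub>m n = M + (- c) \<cdot>\<^sub>m 1\<^sub>m n"
    using assms matrix_subalgebraD(1)[OF S] by (intro eq_matI) auto
  with Cons assms show ?case by (simp add: matrix_subalgebraD[OF S])
qed (simp add: matrix_subalgebraD[OF S])

text \<open>E_ii is a nonzero multiple of the product of D - c I over the diagonal entries c of D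
  other than D_ii.\<close>
lemma mat_unit_diag_mem:
  fixes D :: "'a::field mat"
  assumes S: "matrix_subalgebra n S" and D: "D \<in> S" "diagonal_mat D" "distinct (diag_mat D)"
    and i: "i < n"
  shows "mat_unit n i i \<in> S"
proof -
  have Dc: "D \<in> carrier_mat n n" using matrix_subalgebraD(1)[OF S] D(1) by blast
  define cs where "cs = removeAll (D $$ (i,i)) (diag_mat D)"
  define c where "c = (\<Prod>e\<leftarrow>cs. D $$ (i,i) - e)"
  have "c \<noteq> 0" by (auto simp: c_def cs_def prod_list_zero_iff)
  have inj: "inj_on (\<lambda>a. D $$ (a,a)) {0..<n}"
    using D(3) Dc by (simp add: diag_mat_def distinct_map)
  have other: "D $$ (a,a) \<in> set cs" if "a < n" "a \<noteq> i" for a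
  proof -
    have "D $$ (a,a) \<noteq> D $$ (i,i)" using inj_onD[OF inj, of a i] that i by auto
    then show ?thesis using that Dc by (simp add: cs_def diag_mat_def)
  qed
  have "mat_factor_prod n D cs = c \<cdot>\<^sub>m mat_unit n i i"
    unfolding mat_factor_prod_diagonal[OF Dc D(2)]
    by (rule eq_matI) (auto simp: mat_diag_def mat_unit_def c_def prod_list_zero_iff other)
  then have "mat_unit n i i = (1 / c) \<cdot>\<^sub>m mat_factor_prod n D cs"
    using \<open>c \<noteq> 0\<close> by (intro eq_matI) (auto simp: mat_unit_def)
  then show ?thesis using mat_factor_prod_mem[OF S D(1)] matrix_subalgebraD(5)[OF S] by metis
qed

lemma mat_unit_mem:
  fixes T D :: "'a::field mat"
  assumes S: "matrix_subalgebra n S" and T: "T \<in> S" "irreducible_tridiagonal T"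
    and D: "D \<in> S" "diagonal_mat D" "distinct (diag_mat D)"
  shows "i < n \<Longrightarrow> j < n \<Longrightarrow> mat_unit n i j \<in> S"
proof -
  note closed = matrix_subalgebraD(4,5)[OF S]
  have Tc: "T \<in> carrier_mat n n" using matrix_subalgebraD(1)[OF S] T(1) by blast
  have diag: "mat_unit n i i \<in> S" if "i < n" for i
    by (rule mat_unit_diag_mem[OF S D that])
  have adjacent: "mat_unit n i j \<in> S" if "i < n" "j < n" "j = Suc i \<or> i = Suc j" for i j
  proof -
    have "T $$ (i,j) \<noteq> 0"
      using Tc T(2) that unfolding irreducible_tridiagonal_def by auto
    then have "mat_unit n i j = (1 / T $$ (i,j)) \<cdot>\<^sub>m (mat_unit n i i * T * mat_unit n j j)"
      using mat_unit_sandwich[OF that(1,2) Tc] by (intro eq_matI) (auto simp: mat_unit_def)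
    then show ?thesis using closed diag that T(1) by metis
  qed
  have "mat_unit n i j \<in> S \<and> mat_unit n j i \<in> S" if "i \<le> j" "j < n" for i j
    using that
  proof (induction j rule: dec_induct)
    case base
    show ?case using diag base by simp
  next
    case (step k)
    have "mat_unit n i (Suc k) = (mat_unit n i k * mat_unit n k (Suc k) :: 'a mat)"
      "mat_unit n (Suc k) i = (mat_unit n (Suc k) k * mat_unit n k i :: 'a mat)"
      using step by (simp_all add: mat_unit_mult)
    moreover have "mat_unit n i k \<in> S" "mat_unit n k i \<in> S"
      "mat_unit n k (Suc k) \<in> S" "mat_unit n (Suc k) k \<in> S"
      using adjacent step by auto
    ultimately show ?case using closed(1) by simp
  qed
  then show "i < n \<Longrightarrow> j < n \<Longrightarrow> mat_unit n i j \<in> S" by (cases "i \<le> j") auto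
qed

lemma matrix_subalgebra_full_if_mat_units:
  fixes S :: "'a::field mat set"
  assumes S: "matrix_subalgebra n S" and units: "\<And>i j. i < n \<Longrightarrow> j < n \<Longrightarrow> mat_unit n i j \<in> S"
  shows "carrier_mat n n \<subseteq> S"
proof
  fix X :: "'a mat" assume X: "X \<in> carrier_mat n n"
  note closed = matrix_subalgebraD(2,3,5)[OF S]
  have "X' \<in> S" if "finite F" "F \<subseteq> {..<n} \<times> {..<n}" "X' \<in> carrier_mat n n"
    "\<And>i j. i < n \<Longrightarrow> j < n \<Longrightarrow> (i,j) \<notin> F \<Longrightarrow> X' $$ (i,j) = 0" for F X'
    using that
  proof (induction F arbitrary: X' rule: finite_induct)
    case empty
    then have "X' = 0 \<cdot>\<^sub>m 1\<^sub>m n" by (intro eq_matI) auto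
    then show ?case using closed by metis
  next
    case (insert p F)
    obtain i j where p: "p = (i,j)" "i < n" "j < n" using insert.prems(1) by auto
    define X'' where "X'' = X' + (- X' $$ (i,j)) \<cdot>\<^sub>m mat_unit n i j"
    have "X'' \<in> S"
      using insert p by (intro insert.IH) (auto simp: X''_def mat_unit_def)
    moreover have "X' = X'' + X' $$ (i,j) \<cdot>\<^sub>m mat_unit n i j"
      using insert.prems(2) by (intro eq_matI) (auto simp: X''_def mat_unit_def)
    ultimately show ?case using closed units[OF p(2,3)] by metis
  qed
  from this[of "{..<n} \<times> {..<n}" X] show "X \<in> S" using X by auto
qed

lemma matrix_subalgebra_full_if_tridiagonal_diagonal:
  fixes T D :: "'a::field mat"
  assumes "matrix_subalgebra n S" "T \<in> S" "irreducible_tridiagonal T"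
    and "D \<in> S" "diagonal_mat D" "distinct (diag_mat D)"
  shows "carrier_mat n n \<subseteq> S"
  by (rule matrix_subalgebra_full_if_mat_units[OF assms(1)]) (rule mat_unit_mem[OF assms])

lemma matrix_subalgebra_conj:
  fixes P R :: "'a::comm_semiring_1 mat"
  assumes PR: "P \<in> carrier_mat n n" "R \<in> carrier_mat n n" "P * R = 1\<^sub>m n" "R * P = 1\<^sub>m n"
    and S: "matrix_subalgebra n S"
  shows "matrix_subalgebra n {Y \<in> carrier_mat n n. P * Y * R \<in> S}" (is "matrix_subalgebra n ?S")
  unfolding matrix_subalgebra_def
proof (intro conjI ballI allI)
  show "1\<^sub>m n \<in> ?S"
    using PR matrix_subalgebraD(2)[OF S] by simp
next
  fix X Y assume "X \<in> ?S" "Y \<in> ?S"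
  then have X: "X \<in> carrier_mat n n" "P * X * R \<in> S" and Y: "Y \<in> carrier_mat n n" "P * Y * R \<in> S"
    by auto
  have "P * (X + Y) * R = P * X * R + P * Y * R" "P * (X * Y) * R = (P * X * R) * (P * Y * R)"
    using conj_mat_add[of R n P X Y] conj_mat_mult[of R n P X Y] PR X Y by auto
  then show "X + Y \<in> ?S" "X * Y \<in> ?S"
    using X Y matrix_subalgebraD(3,4)[OF S] by auto
next
  fix c X assume "X \<in> ?S"
  then have X: "X \<in> carrier_mat n n" "P * X * R \<in> S" by auto
  then have "P * (c \<cdot>\<^sub>m X) * R = c \<cdot>\<^sub>m (P * X * R)" using conj_mat_smult[of R n P X c] PR by auto
  then show "c \<cdot>\<^sub>m X \<in> ?S"
    using X matrix_subalgebraD(5)[OF S] by auto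
qed auto

lemma leonard_pair_generates:
  fixes A As :: "'a::field mat"
  assumes LP: "leonard_pair d A As" and S: "matrix_subalgebra (d+1) S" "A \<in> S" "As \<in> S"
  shows "carrier_mat (d+1) (d+1) \<subseteq> S"
proof
  fix X :: "'a mat" assume X: "X \<in> carrier_mat (d+1) (d+1)"
  obtain P R Q Qi where AAs: "A \<in> carrier_mat (d+1) (d+1)" "As \<in> carrier_mat (d+1) (d+1)"
    and PR: "P \<in> carrier_mat (d+1) (d+1)" "R \<in> carrier_mat (d+1) (d+1)"
      "P * R = 1\<^sub>m (d+1)" "R * P = 1\<^sub>m (d+1)"
    and T: "irreducible_tridiagonal (R * A * P)" and D: "diagonal_mat (R * As * P)"
    and QQi: "Q \<in> carrier_mat (d+1) (d+1)" "Qi \<in> carrier_mat (d+1) (d+1)"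
      "Q * Qi = 1\<^sub>m (d+1)" "Qi * Q = 1\<^sub>m (d+1)"
    and T': "irreducible_tridiagonal (Qi * As * Q)"
    using LP unfolding leonard_pair_def by blast
  let ?S = "{Y \<in> carrier_mat (d+1) (d+1). P * Y * R \<in> S}"
  have "carrier_mat (d+1) (d+1) \<subseteq> ?S"
  proof (rule matrix_subalgebra_full_if_tridiagonal_diagonal[OF _ _ T _ D])
    show "matrix_subalgebra (d+1) ?S" by (rule matrix_subalgebra_conj[OF PR S(1)])
    show "R * A * P \<in> ?S" "R * As * P \<in> ?S"
      using S(2,3) AAs PR conj_mat_cancel[of R "d+1" P] by auto
    show "distinct (diag_mat (R * As * P))"
      by (rule distinct_diag_if_similar_irreducible_tridiagonal[OF AAs(2) PR D QQi T'])
  qed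
  moreover have "R * X * P \<in> carrier_mat (d+1) (d+1)" using X PR by (meson mult_carrier_mat)
  ultimately have "P * (R * X * P) * R \<in> S" by blast
  then show "X \<in> S" using X PR conj_mat_cancel[of R "d+1" P X] by simp
qed

section \<open>Antiautomorphisms\<close>

lemma antiautomorphismD:
  assumes "antiautomorphism d f"
  shows "bij_betw f (carrier_mat (d+1) (d+1)) (carrier_mat (d+1) (d+1))"
    and "X \<in> carrier_mat (d+1) (d+1) \<Longrightarrow> f X \<in> carrier_mat (d+1) (d+1)"
    and "X \<in> carrier_mat (d+1) (d+1) \<Longrightarrow> Y \<in> carrier_mat (d+1) (d+1) \<Longrightarrow> f (X + Y) = f X + f Y"
    and "X \<in> carrier_mat (d+1) (d+1) \<Longrightarrow> f (c \<cdot>\<^sub>m X) = c \<cdot>\<^sub>m f X"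
    and "X \<in> carrier_mat (d+1) (d+1) \<Longrightarrow> Y \<in> carrier_mat (d+1) (d+1) \<Longrightarrow> f (X * Y) = f Y * f X"
  using assms bij_betwE unfolding antiautomorphism_def by blast+

lemma antiautomorphism_one:
  fixes f :: "'a::field mat \<Rightarrow> 'a mat"
  assumes f: "antiautomorphism d f"
  shows "f (1\<^sub>m (d+1)) = 1\<^sub>m (d+1)"
proof -
  obtain Z where Z: "Z \<in> carrier_mat (d+1) (d+1)" "f Z = 1\<^sub>m (d+1)"
    using antiautomorphismD(1)[OF f] one_carrier_mat unfolding bij_betw_def by (metis imageE)
  have "1\<^sub>m (d+1) = f (Z * 1\<^sub>m (d+1))" using Z by simp
  also have "\<dots> = f (1\<^sub>m (d+1)) * 1\<^sub>m (d+1)"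
    using antiautomorphismD(5)[OF f Z(1) one_carrier_mat] Z(2) by simp
  also have "\<dots> = f (1\<^sub>m (d+1))" using antiautomorphismD(2)[OF f one_carrier_mat] by simp
  finally show ?thesis ..
qed

lemma antiautomorphism_equalizer:
  fixes f g :: "'a::field mat \<Rightarrow> 'a mat"
  assumes f: "antiautomorphism d f" and g: "antiautomorphism d g"
  shows "matrix_subalgebra (d+1) {X \<in> carrier_mat (d+1) (d+1). f X = g X}"
  using antiautomorphism_one[OF f] antiautomorphism_one[OF g]
    antiautomorphismD(3-5)[OF f] antiautomorphismD(3-5)[OF g]
  unfolding matrix_subalgebra_def by auto

lemma antiautomorphism_conj:
  fixes P R :: "'a::field mat"
  assumes \<tau>: "antiautomorphism d \<tau>"
    and PR: "P \<in> carrier_mat (d+1) (d+1)" "R \<in> carrier_mat (d+1) (d+1)"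
      "P * R = 1\<^sub>m (d+1)" "R * P = 1\<^sub>m (d+1)"
  shows "antiautomorphism d (\<lambda>X. P * \<tau> (R * X * P) * R)"
  unfolding antiautomorphism_def
proof (intro conjI ballI allI)
  let ?C = "carrier_mat (d+1) (d+1)"
  have "bij_betw (\<lambda>X. R * X * P) ?C ?C" "bij_betw (\<lambda>Y. P * Y * R) ?C ?C"
    using bij_betw_conj_mat PR by blast+
  then have "bij_betw ((\<lambda>Y. P * Y * R) \<circ> \<tau> \<circ> (\<lambda>X. R * X * P)) ?C ?C"
    using antiautomorphismD(1)[OF \<tau>] by (blast intro: bij_betw_trans)
  then show "bij_betw (\<lambda>X. P * \<tau> (R * X * P) * R) ?C ?C"
    by (simp add: comp_def)
next
  fix X Y :: "'a mat" assume X: "X \<in> carrier_mat (d+1) (d+1)" and Y: "Y \<in> carrier_mat (d+1) (d+1)"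
  have RXP: "R * X * P \<in> carrier_mat (d+1) (d+1)" "R * Y * P \<in> carrier_mat (d+1) (d+1)"
    using X Y PR by (meson mult_carrier_mat)+
  note \<tau>_carrier = antiautomorphismD(2)[OF \<tau> RXP(1)] antiautomorphismD(2)[OF \<tau> RXP(2)]
  show "P * \<tau> (R * (X + Y) * P) * R = P * \<tau> (R * X * P) * R + P * \<tau> (R * Y * P) * R"
    using conj_mat_add[of P "d+1" R X Y] conj_mat_add[of R "d+1" P] antiautomorphismD(3)[OF \<tau> RXP]
      \<tau>_carrier X Y PR by simp
  show "P * \<tau> (R * (X * Y) * P) * R = P * \<tau> (R * Y * P) * R * (P * \<tau> (R * X * P) * R)"
    using conj_mat_mult[of P "d+1" R X Y] conj_mat_mult[of R "d+1" P] antiautomorphismD(5)[OF \<tau> RXP]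
      \<tau>_carrier X Y PR by simp
  show "P * \<tau> (R * (c \<cdot>\<^sub>m X) * P) * R = c \<cdot>\<^sub>m (P * \<tau> (R * X * P) * R)" for c
    using conj_mat_smult[of P "d+1" R X c] conj_mat_smult[of R "d+1" P]
      antiautomorphismD(4)[OF \<tau> RXP(1)] \<tau>_carrier X PR by simp
qed

lemma involution_conj:
  fixes P R :: "'a::field mat"
  assumes \<tau>: "antiautomorphism d \<tau>" "\<forall>Y\<in>carrier_mat (d+1) (d+1). \<tau> (\<tau> Y) = Y"
    and PR: "P \<in> carrier_mat (d+1) (d+1)" "R \<in> carrier_mat (d+1) (d+1)"
      "P * R = 1\<^sub>m (d+1)" "R * P = 1\<^sub>m (d+1)"
    and X: "X \<in> carrier_mat (d+1) (d+1)"
  shows "P * \<tau> (R * (P * \<tau> (R * X * P) * R) * P) * R = X"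
proof -
  have RXP: "R * X * P \<in> carrier_mat (d+1) (d+1)" using X PR by (meson mult_carrier_mat)
  have "R * (P * \<tau> (R * X * P) * R) * P = \<tau> (R * X * P)"
    by (rule conj_mat_cancel) (use PR antiautomorphismD(2)[OF \<tau>(1) RXP] in auto)
  then show ?thesis using \<tau>(2) RXP conj_mat_cancel[of R "d+1" P X] PR X by simp
qed

text \<open>The recursion k (i+1) T(i,i+1) = k i T(i+1,i) is exactly the condition K T^T K^-1 = T
  for the diagonal matrix K = diag k.\<close>
fun balancing_coeff :: "'a::field mat \<Rightarrow> nat \<Rightarrow> 'a" where
  "balancing_coeff T 0 = 1"
| "balancing_coeff T (Suc i) = balancing_coeff T i * T $$ (Suc i, i) / T $$ (i, Suc i)"

lemma balancing_coeff_nonzero: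
  assumes "irreducible_tridiagonal T" "i < dim_row T"
  shows "balancing_coeff T i \<noteq> 0"
  using assms by (induction i) (auto simp: irreducible_tridiagonal_def)

text \<open>This is Y \<mapsto> K Y^T K^-1 for K = diag(k 0, ..., k (n-1)).\<close>
definition twisted_transpose :: "nat \<Rightarrow> (nat \<Rightarrow> 'a::field) \<Rightarrow> 'a mat \<Rightarrow> 'a mat" where
  "twisted_transpose n k Y = mat n n (\<lambda>(i,j). k i * Y $$ (j,i) / k j)"

lemma twisted_transpose_carrier[simp]: "twisted_transpose n k Y \<in> carrier_mat n n"
  by (simp add: twisted_transpose_def)

lemma twisted_transpose_involution:
  assumes "\<And>i. i < n \<Longrightarrow> k i \<noteq> 0" "Y \<in> carrier_mat n n"
  shows "twisted_transpose n k (twisted_transpose n k Y) = Y"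
  using assms by (intro eq_matI) (auto simp: twisted_transpose_def)

lemma twisted_transpose_mult:
  assumes k: "\<And>i. i < n \<Longrightarrow> k i \<noteq> 0" and YZ: "Y \<in> carrier_mat n n" "Z \<in> carrier_mat n n"
  shows "twisted_transpose n k (Y * Z) = twisted_transpose n k Z * twisted_transpose n k Y"
proof (rule eq_matI)
  fix i j assume "i < dim_row (twisted_transpose n k Z * twisted_transpose n k Y)"
    "j < dim_col (twisted_transpose n k Z * twisted_transpose n k Y)"
  then have ij: "i < n" "j < n" by (auto simp: twisted_transpose_def)
  have "twisted_transpose n k (Y * Z) $$ (i,j) = k i * (\<Sum>l = 0..<n. Y $$ (j,l) * Z $$ (l,i)) / k j"
    using ij YZ by (simp add: twisted_transpose_def scalar_prod_def)
  also have "\<dots> = (\<Sum>l = 0..<n. (k i * Z $$ (l,i) / k l) * (k l * Y $$ (j,l) / k j))"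
    unfolding sum_distrib_left sum_divide_distrib
    by (rule sum.cong) (use k in \<open>auto simp: field_simps\<close>)
  also have "\<dots> = (twisted_transpose n k Z * twisted_transpose n k Y) $$ (i,j)"
    using ij by (simp add: twisted_transpose_def scalar_prod_def)
  finally show "twisted_transpose n k (Y * Z) $$ (i,j) =
      (twisted_transpose n k Z * twisted_transpose n k Y) $$ (i,j)" .
qed (auto simp: twisted_transpose_def)

lemma antiautomorphism_twisted_transpose:
  assumes k: "\<And>i. i < d + 1 \<Longrightarrow> k i \<noteq> 0"
  shows "antiautomorphism d (twisted_transpose (d+1) k)"
  unfolding antiautomorphism_def
proof (intro conjI ballI allI)
  show "bij_betw (twisted_transpose (d+1) k) (carrier_mat (d+1) (d+1)) (carrier_mat (d+1) (d+1))"
    by (rule bij_betw_byWitness[where f' = "twisted_transpose (d+1) k"])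
      (use k twisted_transpose_involution in auto)
next
  fix X Y :: "'a mat" assume "X \<in> carrier_mat (d+1) (d+1)" "Y \<in> carrier_mat (d+1) (d+1)"
  then show
    "twisted_transpose (d+1) k (X + Y) = twisted_transpose (d+1) k X + twisted_transpose (d+1) k Y"
    "twisted_transpose (d+1) k (X * Y) = twisted_transpose (d+1) k Y * twisted_transpose (d+1) k X"
    using k twisted_transpose_mult[of "d+1" k X Y]
    by (auto simp: twisted_transpose_def add_divide_distrib distrib_left)
next
  fix c and X :: "'a mat" assume "X \<in> carrier_mat (d+1) (d+1)"
  then show "twisted_transpose (d+1) k (c \<cdot>\<^sub>m X) = c \<cdot>\<^sub>m twisted_transpose (d+1) k X"
    by (auto simp: twisted_transpose_def)
qed

lemma twisted_transpose_diagonal: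
  assumes "D \<in> carrier_mat n n" "diagonal_mat D" "\<And>i. i < n \<Longrightarrow> k i \<noteq> 0"
  shows "twisted_transpose n k D = D"
proof (rule eq_matI)
  fix i j assume "i < dim_row D" "j < dim_col D"
  with assms show "twisted_transpose n k D $$ (i,j) = D $$ (i,j)"
    by (cases "i = j") (auto simp: twisted_transpose_def diagonal_mat_def)
qed (use assms in \<open>auto simp: twisted_transpose_def\<close>)

lemma twisted_transpose_balancing_coeff:
  assumes T: "T \<in> carrier_mat n n" "irreducible_tridiagonal T"
  shows "twisted_transpose n (balancing_coeff T) T = T"
proof (rule eq_matI)
  fix i j assume "i < dim_row T" "j < dim_col T"
  then have ij: "i < n" "j < n" using T by auto
  have k: "balancing_coeff T l \<noteq> 0" if "l < n" for l
    using balancing_coeff_nonzero[OF T(2)] T that by auto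
  have nz: "T $$ (l, Suc l) \<noteq> 0" "T $$ (Suc l, l) \<noteq> 0" if "Suc l < n" for l
    using T that unfolding irreducible_tridiagonal_def by auto
  consider "i = j" | "j = Suc i" | "i = Suc j" | "Suc i < j \<or> Suc j < i" by linarith
  then show "twisted_transpose n (balancing_coeff T) T $$ (i,j) = T $$ (i,j)"
  proof cases
    case 4
    then show ?thesis
      using T ij by (auto simp: twisted_transpose_def irreducible_tridiagonal_def tridiagonal_def)
  qed (use ij k nz in \<open>auto simp: twisted_transpose_def field_simps\<close>)
qed (use T in \<open>auto simp: twisted_transpose_def\<close>)

lemma leonard_pair_involutive_antiautomorphism:
  fixes A As :: "'a::field mat"
  assumes "leonard_pair d A As"
  obtains f where "antiautomorphism d f" "f A = A" "f As = As"
    "\<forall>X\<in>carrier_mat (d+1) (d+1). f (f X) = X"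
proof -
  obtain P R where AAs: "A \<in> carrier_mat (d+1) (d+1)" "As \<in> carrier_mat (d+1) (d+1)"
    and PR: "P \<in> carrier_mat (d+1) (d+1)" "R \<in> carrier_mat (d+1) (d+1)"
      "P * R = 1\<^sub>m (d+1)" "R * P = 1\<^sub>m (d+1)"
    and T: "irreducible_tridiagonal (R * A * P)" and D: "diagonal_mat (R * As * P)"
    using assms unfolding leonard_pair_def by blast
  define k where "k = balancing_coeff (R * A * P)"
  define \<tau> where "\<tau> = twisted_transpose (d+1) k"
  have RP: "R * A * P \<in> carrier_mat (d+1) (d+1)" "R * As * P \<in> carrier_mat (d+1) (d+1)"
    using AAs PR by (meson mult_carrier_mat)+
  have k: "k i \<noteq> 0" if "i < d + 1" for i
    unfolding k_def by (rule balancing_coeff_nonzero[OF T]) (use RP that in auto)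
  have \<tau>: "antiautomorphism d \<tau>" "\<forall>Y\<in>carrier_mat (d+1) (d+1). \<tau> (\<tau> Y) = Y"
    using antiautomorphism_twisted_transpose[OF k] twisted_transpose_involution[OF k]
    unfolding \<tau>_def by auto
  have fixed: "\<tau> (R * A * P) = R * A * P" "\<tau> (R * As * P) = R * As * P"
    unfolding \<tau>_def k_def
    using twisted_transpose_balancing_coeff[OF RP(1) T]
      twisted_transpose_diagonal[OF RP(2) D k[unfolded k_def]] by auto
  show thesis
  proof
    show "antiautomorphism d (\<lambda>X. P * \<tau> (R * X * P) * R)"
      by (rule antiautomorphism_conj[OF \<tau>(1) PR])
    show "P * \<tau> (R * A * P) * R = A" "P * \<tau> (R * As * P) * R = As"
      unfolding fixed using conj_mat_cancel[of R "d+1" P] PR AAs by auto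
    show "\<forall>X\<in>carrier_mat (d+1) (d+1). P * \<tau> (R * (P * \<tau> (R * X * P) * R) * P) * R = X"
      using involution_conj[OF \<tau> PR] by blast
  qed
qed

theorem theorem6p1:
  fixes d :: nat and A As :: "'a::field mat"
  assumes "leonard_pair d A As"
  shows "\<exists>f. antiautomorphism d f \<and> f A = A \<and> f As = As \<and>
            (\<forall>g. antiautomorphism d g \<and> g A = A \<and> g As = As \<longrightarrow>
                 (\<forall>X\<in>carrier_mat (d+1) (d+1). g X = f X)) \<and>
            (\<forall>X\<in>carrier_mat (d+1) (d+1). f (f X) = X)"
proof -
  obtain f where f: "antiautomorphism d f" "f A = A" "f As = As"
    "\<forall>X\<in>carrier_mat (d+1) (d+1). f (f X) = X"
    using leonard_pair_involutive_antiautomorphism[OF assms] by blast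
  have AAs: "A \<in> carrier_mat (d+1) (d+1)" "As \<in> carrier_mat (d+1) (d+1)"
    using assms unfolding leonard_pair_def by auto
  have "g X = f X" if g: "antiautomorphism d g" "g A = A" "g As = As"
    and X: "X \<in> carrier_mat (d+1) (d+1)" for g X
  proof -
    have "carrier_mat (d+1) (d+1) \<subseteq> {X \<in> carrier_mat (d+1) (d+1). g X = f X}"
      by (rule leonard_pair_generates[OF assms antiautomorphism_equalizer[OF g(1) f(1)]])
        (use AAs f g in auto)
    then show ?thesis using X by blast
  qed
  with f show ?thesis by blast
qed

end
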